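(* Let $R$ be a ring with identity and $a\in R$. Then $a$ is pseudopolar if and only if $a=s+q$ where $s$ is strongly regular, $s\in\mathrm{comm}^2(a)$, $q\in J^\#(R)$, and $sq=qs=0$.
   Context: $J(R)$ is the Jacobson radical and $U(R)$ the unit group of $R$; $J^\#(R)=\{x\in R\mid x^n\in J(R)\text{ for some }n\in\mathbb{N}\}$. $\mathrm{comm}(a)=\{x\in R\mid xa=ax\}$, $\mathrm{comm}^2(a)=\{x\in R\mid xy=yx\text{ for all }y\in\mathrm{comm}(a)\}$. An element $a\in R$ is pseudopolar if there exist an idempotent $p\in\mathrm{comm}^2(a)$ and $k\in\mathbb{N}$ with $a+p\in U(R)$ and $a^kp\in J(R)$. An element $s$ is strongly regular if $s=sbs$ for some $b\in R$ with $bs=sb$. *)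

theory Defs
  imports Main
begin

definition unit_el :: "'a::ring_1 \<Rightarrow> bool" where
  "unit_el u \<longleftrightarrow> (\<exists>v. u * v = 1 \<and> v * u = 1)"

text \<open>Jacobson radical, via the standard elementwise characterization
  x in J(R) iff 1 - r x is a unit for every r.\<close>
definition jacobson :: "'a::ring_1 set" where
  "jacobson = {x. \<forall>r. unit_el (1 - r * x)}"

definition jsharp :: "'a::ring_1 set" where
  "jsharp = {x. \<exists>n::nat. n \<ge> 1 \<and> x ^ n \<in> jacobson}"

definition comm :: "'a::ring_1 \<Rightarrow> 'a set" where
  "comm a = {x. x * a = a * x}"

definition comm2 :: "'a::ring_1 \<Rightarrow> 'a set" where
  "comm2 a = {x. \<forall>y\<in>comm a. x * y = y * x}"

definition pseudopolar :: "'a::ring_1 \<Rightarrow> bool" where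
  "pseudopolar a \<longleftrightarrow> (\<exists>p (k::nat). k \<ge> 1 \<and> p * p = p \<and> p \<in> comm2 a \<and> unit_el (a + p)
                        \<and> a ^ k * p \<in> jacobson)"

definition strongly_regular :: "'a::ring_1 \<Rightarrow> bool" where
  "strongly_regular s \<longleftrightarrow> (\<exists>b. s = s * b * s \<and> b * s = s * b)"

end

theory Submission
  imports Defs
begin

text \<open>Given the idempotent \<open>p\<close>, the decomposition is \<open>s = a(1 - p) = (a + p)(1 - p)\<close>, strongly
  regular as a unit times a commuting idempotent, and \<open>q = ap\<close>, whose powers \<open>a\<^sup>kp\<close> lie in
  \<open>J(R)\<close>. Conversely, if \<open>s = sbs\<close> with \<open>bs = sb\<close>, then \<open>e = sb\<close> is an idempotent commuting with
  everything that commutes with \<open>s\<close>, hence \<open>p = 1 - e \<in> comm\<^sup>2(a)\<close>; moreover \<open>ap = q\<close> and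
  \<open>a + p = (s + 1 - e)(1 + q)\<close> is a product of units, \<open>1 + q\<close> being a unit because some power
  of \<open>q\<close> lies in \<open>J(R)\<close>.\<close>

lemma inverse_commutes:
  fixes w v e :: "'a::ring_1"
  assumes "w * v = 1" "v * w = 1" "w * e = e * w"
  shows "v * e = e * v"
proof -
  have "v * e = v * (e * w) * v" using assms(1) by (simp add: mult.assoc)
  also have "\<dots> = v * (w * e) * v" using assms(3) by simp
  also have "\<dots> = e * v" using assms(2) by (simp add: mult.assoc[symmetric])
  finally show ?thesis .
qed

lemma unit_el_mult:
  fixes x y :: "'a::ring_1"
  assumes "unit_el x" "unit_el y"
  shows "unit_el (x * y)"
proof -
  obtain u where "x * u = 1" "u * x = 1" using assms(1) unfolding unit_el_def by blast
  moreover obtain v where "y * v = 1" "v * y = 1" using assms(2) unfolding unit_el_def by blast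
  ultimately have "x * y * (v * u) = 1" "v * u * (x * y) = 1"
    by (metis mult.assoc mult_1_left)+
  then show ?thesis unfolding unit_el_def by blast
qed

lemma unit_el_of_commuting_factor:
  fixes x c :: "'a::ring_1"
  assumes "x * c = c * x" "unit_el (x * c)"
  shows "unit_el x"
proof -
  obtain w where w: "x * c * w = 1" "w * (x * c) = 1" using assms(2) unfolding unit_el_def by blast
  have wc: "w * c = c * w"
    by (metis assms(1) inverse_commutes[OF w] mult.assoc)
  have "x * (c * w) = 1" "c * w * x = 1"
    using w by (metis assms(1) wc mult.assoc)+
  then show ?thesis unfolding unit_el_def by blast
qed

lemma sum_powers_commute:
  fixes x :: "'a::ring_1"
  shows "x * (\<Sum>i<n. x ^ i) = (\<Sum>i<n. x ^ i) * x"
  by (simp add: sum_distrib_left sum_distrib_right power_commutes)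

lemma one_diff_power_eq_ring_1:
  fixes x :: "'a::ring_1"
  shows "(1 - x) * (\<Sum>i<n. x ^ i) = 1 - x ^ n"
  by (induction n) (simp_all add: distrib_left left_diff_distrib)

lemma unit_el_one_diff_jacobson:
  "x \<in> jacobson \<Longrightarrow> unit_el (1 - r * x)"
  unfolding jacobson_def by blast

lemma unit_el_one_plus_jsharp:
  fixes q :: "'a::ring_1"
  assumes "q \<in> jsharp"
  shows "unit_el (1 + q)"
proof -
  obtain n where "q ^ n \<in> jacobson" using assms unfolding jsharp_def by blast
  then have "unit_el (1 - (- q) ^ n)"
    unfolding power_minus[of q] by (rule unit_el_one_diff_jacobson)
  moreover have "(1 + q) * (\<Sum>i<n. (- q) ^ i) = 1 - (- q) ^ n"
    using one_diff_power_eq_ring_1[of "- q" n] by simp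
  moreover have "(1 + q) * (\<Sum>i<n. (- q) ^ i) = (\<Sum>i<n. (- q) ^ i) * (1 + q)"
    using sum_powers_commute[of "- q" n] by (simp add: distrib_left distrib_right)
  ultimately show ?thesis using unit_el_of_commuting_factor by metis
qed

lemma comm2_commutes: "x \<in> comm2 a \<Longrightarrow> x * a = a * x"
  unfolding comm2_def comm_def by auto

lemma self_in_comm2: "a \<in> comm2 a"
  unfolding comm2_def comm_def by auto

lemma one_in_comm2: "1 \<in> comm2 a"
  unfolding comm2_def by auto

lemma diff_in_comm2: "x \<in> comm2 a \<Longrightarrow> y \<in> comm2 a \<Longrightarrow> x - y \<in> comm2 a"
  unfolding comm2_def by (auto simp: algebra_simps)

lemma mult_in_comm2: "x \<in> comm2 a \<Longrightarrow> y \<in> comm2 a \<Longrightarrow> x * y \<in> comm2 a"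
  unfolding comm2_def by (auto simp: mult.assoc) (metis mult.assoc)

lemma power_mult_commuting_idem:
  fixes x p :: "'a::ring_1"
  assumes "x * p = p * x" "p * p = p" "k \<ge> 1"
  shows "(x * p) ^ k = x ^ k * p"
  using assms(3)
proof (induction k rule: dec_induct)
  case (step m)
  have "(x * p) ^ Suc m = x ^ m * p * (x * p)" by (simp only: step.IH power_Suc2)
  also have "\<dots> = x ^ m * (p * x) * p" by (simp add: mult.assoc)
  also have "\<dots> = x ^ m * x * (p * p)" by (metis assms(1) mult.assoc)
  also have "\<dots> = x ^ Suc m * p" by (simp only: assms(2) power_Suc2)
  finally show ?case .
qed simp

lemma strongly_regular_unit_mult_idem:
  fixes w e :: "'a::ring_1"
  assumes "unit_el w" "e * e = e" "w * e = e * w"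
  shows "strongly_regular (w * e)"
proof -
  obtain v where v: "w * v = 1" "v * w = 1" using assms(1) unfolding unit_el_def by blast
  have ve: "v * e = e * v" using inverse_commutes[OF v assms(3)] .
  have sb: "w * e * (v * e) = e"
  proof -
    have "w * e * (v * e) = w * (e * v) * e" by (simp add: mult.assoc)
    also have "\<dots> = (w * v) * (e * e)" by (metis ve mult.assoc)
    finally show ?thesis using v assms(2) by simp
  qed
  have bs: "v * e * (w * e) = e"
  proof -
    have "v * e * (w * e) = v * (e * w) * e" by (simp add: mult.assoc)
    also have "\<dots> = (v * w) * (e * e)" by (metis assms(3) mult.assoc)
    finally show ?thesis using v assms(2) by simp
  qed
  have "w * e * (v * e) * (w * e) = e * (w * e)" by (simp only: sb)
  also have "\<dots> = w * e" by (metis assms(2,3) mult.assoc)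
  finally show ?thesis using sb bs unfolding strongly_regular_def by metis
qed

lemma strongly_regular_idem_commutes:
  fixes s b y :: "'a::ring_1"
  assumes sbs: "s * b * s = s" and bs: "b * s = s * b" and ys: "y * s = s * y"
  shows "y * (s * b) = s * b * y"
proof -
  define e where "e = s * b"
  have se: "s * (1 - e) = 0"
    using sbs unfolding e_def by (metis bs mult.assoc mult_1_right right_diff_distrib right_minus_eq)
  have es: "(1 - e) * s = 0"
    using sbs unfolding e_def by (simp add: left_diff_distrib)
  have "e * y * (1 - e) = b * y * (s * (1 - e))"
    unfolding e_def by (metis bs ys mult.assoc)
  then have "e * y = e * y * e" using se by (simp add: right_diff_distrib)
  moreover have "(1 - e) * y * e = (1 - e) * s * y * b"
    unfolding e_def by (metis ys mult.assoc)
  then have "y * e = e * y * e" using es by (simp add: left_diff_distrib)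
  ultimately show ?thesis unfolding e_def by simp
qed

lemma strongly_regular_plus_complement_unit:
  fixes s b :: "'a::ring_1"
  assumes sbs: "s * b * s = s" and bs: "b * s = s * b"
  shows "unit_el (s + (1 - s * b))"
proof -
  define e where "e = s * b"
  define t where "t = b * e"
  have "e * e = e" "s * e = s" "e * s = s" "s * t = e" "t * s = e" "e * t = t" "t * e = t"
    unfolding t_def e_def using sbs bs by (metis mult.assoc)+
  then have "(s + (1 - e)) * (t + (1 - e)) = 1" "(t + (1 - e)) * (s + (1 - e)) = 1"
    by (simp_all add: distrib_left distrib_right left_diff_distrib right_diff_distrib)
  then show ?thesis unfolding unit_el_def e_def by blast
qed

lemma decomposition_of_pseudopolar:
  fixes a p :: "'a::ring_1"
  assumes pp: "p * p = p" and pc: "p \<in> comm2 a" and u: "unit_el (a + p)"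
    and J: "a ^ k * p \<in> jacobson" and k: "k \<ge> 1"
  defines "s \<equiv> a * (1 - p)" and "q \<equiv> a * p"
  shows "a = s + q" "strongly_regular s" "s \<in> comm2 a" "q \<in> jsharp" "s * q = 0" "q * s = 0"
proof -
  have pa: "p * a = a * p" using comm2_commutes[OF pc] .
  show "a = s + q" unfolding s_def q_def by (simp add: algebra_simps)
  have "(a + p) * (1 - p) = (1 - p) * (a + p)" "(1 - p) * (1 - p) = 1 - p"
    using pa pp by (simp_all add: algebra_simps)
  moreover have "s = (a + p) * (1 - p)" unfolding s_def using pp by (simp add: algebra_simps)
  ultimately show "strongly_regular s" using strongly_regular_unit_mult_idem[OF u] by metis
  show "s \<in> comm2 a" unfolding s_def
    by (intro mult_in_comm2 diff_in_comm2 self_in_comm2 one_in_comm2 pc)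
  show "q \<in> jsharp" unfolding jsharp_def q_def
    using power_mult_commuting_idem[OF pa[symmetric] pp k] J k by auto
  have "p * (a * x) = a * (p * x)" "p * (p * x) = p * x" for x
    by (metis pa pp mult.assoc)+
  then show "s * q = 0" "q * s = 0" unfolding s_def q_def by (simp_all add: algebra_simps pa pp)
qed

lemma pseudopolar_of_decomposition:
  fixes a s q :: "'a::ring_1"
  assumes a: "a = s + q" and sr: "strongly_regular s" and sc: "s \<in> comm2 a"
    and qj: "q \<in> jsharp" and sq: "s * q = 0" and qs: "q * s = 0"
  shows "pseudopolar a"
proof -
  obtain b where sbs: "s * b * s = s" and bs: "b * s = s * b"
    using sr unfolding strongly_regular_def by metis
  define e where "e = s * b"
  have "e \<in> comm2 a"
    using sc strongly_regular_idem_commutes[OF sbs bs] unfolding comm2_def e_def by auto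
  then have pc: "1 - e \<in> comm2 a" by (intro diff_in_comm2 one_in_comm2)
  have ee: "e * e = e" and se: "s * e = s" and eq: "e * q = 0" and qe: "q * e = 0"
    unfolding e_def using sbs bs sq qs by (metis mult.assoc mult_zero_left mult_zero_right)+
  have pp: "(1 - e) * (1 - e) = 1 - e" using ee by (simp add: algebra_simps)
  have ap: "a * (1 - e) = q" unfolding a using se qe by (simp add: algebra_simps)
  obtain n where n: "n \<ge> 1" "q ^ n \<in> jacobson" using qj unfolding jsharp_def by blast
  have J: "a ^ n * (1 - e) \<in> jacobson"
    using power_mult_commuting_idem[OF comm2_commutes[OF pc, symmetric] pp n(1)] ap n(2) by simp
  have "a + (1 - e) = (s + (1 - e)) * (1 + q)"
    unfolding a using sq eq by (simp add: algebra_simps)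
  moreover have "unit_el ((s + (1 - e)) * (1 + q))"
    using unit_el_mult strongly_regular_plus_complement_unit[OF sbs bs] unit_el_one_plus_jsharp[OF qj]
    unfolding e_def by blast
  ultimately show ?thesis unfolding pseudopolar_def using n(1) pp pc J by metis
qed

theorem theorem4p1:
  fixes a :: "'a::ring_1"
  shows "pseudopolar a \<longleftrightarrow>
    (\<exists>s q. a = s + q \<and> strongly_regular s \<and> s \<in> comm2 a \<and> q \<in> jsharp
           \<and> s * q = 0 \<and> q * s = 0)"
proof
  assume "pseudopolar a"
  then obtain p k where "k \<ge> 1" "p * p = p" "p \<in> comm2 a" "unit_el (a + p)" "a ^ k * p \<in> jacobson"
    unfolding pseudopolar_def by blast
  from decomposition_of_pseudopolar[OF this(2-5,1)]
  show "\<exists>s q. a = s + q \<and> strongly_regular s \<and> s \<in> comm2 a \<and> q \<in> jsharp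
           \<and> s * q = 0 \<and> q * s = 0" by blast
next
  assume "\<exists>s q. a = s + q \<and> strongly_regular s \<and> s \<in> comm2 a \<and> q \<in> jsharp
           \<and> s * q = 0 \<and> q * s = 0"
  then show "pseudopolar a" using pseudopolar_of_decomposition by blast
qed

end
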